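(* Let $q=p^a$, let $\iota:\mathbf Z_p\to\mathbf C$ be an embedding of rings, and let $(M,F)$ satisfy (M1)–(M4). Then complex conjugation on $M\otimes\mathbf C$ maps the subspace $M^s\otimes_{\mathbf Z_p,\iota}\mathbf C$ onto $M^{2-s}\otimes_{\mathbf Z_p,\iota}\mathbf C$ for $s=0,1,2$. In particular the decomposition $M\otimes\mathbf C=\bigoplus_s M^s\otimes_{\mathbf Z_p,\iota}\mathbf C$ (with $M^s\otimes_{\mathbf Z_p,\iota}\mathbf C$ in Hodge type $(s,2-s)$) is a $\mathbf Z$-Hodge structure on $M$.
   Context: $M$ is a free $\mathbf Z$-module of finite rank with a symmetric bilinear form $\langle-,-\rangle$ and $F$ an endomorphism of $M$. (M1) $\langle-,-\rangle$ is unimodular, even, of signature $(3,19)$; (M2) $\langle Fx,Fy\rangle=q^2\langle x,y\rangle$ for all $x,y$; (M3) $F$ is semisimple on $M\otimes\mathbf C$ with all eigenvalues of absolute value $q$; (M4) the $\mathbf Z_p[F]$-module $M\otimes\mathbf Z_p$ decomposes as $M^0\oplus M^1\oplus M^2$ with $FM^s=q^sM^s$ and $M^0,M^1,M^2$ free of ranks $1,20,1$. Here $M\otimes\mathbf C=(M\otimes\mathbf Z_p)\otimes_{\mathbf Z_p,\iota}\mathbf C$. *)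

theory Defs
  imports "HOL-Analysis.Analysis"
begin

text \<open>M is modelled as int^'n (a free Z-module with basis indexed by the finite type 'n);
  the symmetric bilinear form by its Gram matrix G, the endomorphism F by an integer matrix.\<close>

definition bil :: "int^'n^'n \<Rightarrow> int^'n \<Rightarrow> int^'n \<Rightarrow> int" where
  "bil G x y = (\<Sum>i\<in>UNIV. \<Sum>j\<in>UNIV. x$i * G$i$j * y$j)"

definition real_mat :: "int^'n^'m \<Rightarrow> real^'n^'m" where
  "real_mat A = (\<chi> i j. real_of_int (A$i$j))"

definition complex_mat :: "int^'n^'m \<Rightarrow> complex^'n^'m" where
  "complex_mat A = (\<chi> i j. complex_of_int (A$i$j))"

definition has_signature :: "real^'n^'n \<Rightarrow> nat \<Rightarrow> nat \<Rightarrow> bool" where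
  "has_signature A r s \<longleftrightarrow> CARD('n) = r + s \<and>
     (\<exists>P::real^'n^'n. \<exists>S::'n set. invertible P \<and> card S = r \<and>
        transpose P ** A ** P = (\<chi> i j. if i = j then (if i \<in> S then 1 else -1) else 0))"

definition M1 :: "int^'n^'n \<Rightarrow> bool" where
  "M1 G \<longleftrightarrow> transpose G = G \<and> (det G = 1 \<or> det G = -1) \<and>
     (\<forall>x. even (bil G x x)) \<and> has_signature (real_mat G) 3 19"

definition M2 :: "nat \<Rightarrow> int^'n^'n \<Rightarrow> int^'n^'n \<Rightarrow> bool" where
  "M2 q G F \<longleftrightarrow> (\<forall>x y. bil G (F *v x) (F *v y) = int q ^ 2 * bil G x y)"

text \<open>(M3): F is semisimple (= diagonalizable, C being algebraically closed) on M\<otimes>C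
  and every eigenvalue has absolute value q.\<close>
definition M3 :: "nat \<Rightarrow> int^'n^'n \<Rightarrow> bool" where
  "M3 q F \<longleftrightarrow>
     (\<exists>P::complex^'n^'n. \<exists>d::'n \<Rightarrow> complex. invertible P \<and>
        complex_mat F ** P = P ** (\<chi> i j. if i = j then d i else 0)) \<and>
     (\<forall>(c::complex) (v::complex^'n). v \<noteq> 0 \<and> complex_mat F *v v = c *s v \<longrightarrow> cmod c = real q)"

text \<open>An element of Z_p is a compatible sequence of residues x k \<in> {0..<p^k}.\<close>
definition Zp :: "nat \<Rightarrow> (nat \<Rightarrow> int) set" where
  "Zp p = {x. \<forall>k. 0 \<le> x k \<and> x k < int p ^ k \<and> x (Suc k) mod int p ^ k = x k}"

definition zp_add :: "nat \<Rightarrow> (nat \<Rightarrow> int) \<Rightarrow> (nat \<Rightarrow> int) \<Rightarrow> (nat \<Rightarrow> int)" where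
  "zp_add p x y = (\<lambda>k. (x k + y k) mod int p ^ k)"

definition zp_mult :: "nat \<Rightarrow> (nat \<Rightarrow> int) \<Rightarrow> (nat \<Rightarrow> int) \<Rightarrow> (nat \<Rightarrow> int)" where
  "zp_mult p x y = (\<lambda>k. (x k * y k) mod int p ^ k)"

definition zp_one :: "nat \<Rightarrow> (nat \<Rightarrow> int)" where
  "zp_one p = (\<lambda>k. 1 mod int p ^ k)"

definition ring_embedding :: "nat \<Rightarrow> ((nat \<Rightarrow> int) \<Rightarrow> complex) \<Rightarrow> bool" where
  "ring_embedding p \<iota> \<longleftrightarrow> inj_on \<iota> (Zp p) \<and> \<iota> (zp_one p) = 1 \<and>
     (\<forall>x\<in>Zp p. \<forall>y\<in>Zp p. \<iota> (zp_add p x y) = \<iota> x + \<iota> y \<and> \<iota> (zp_mult p x y) = \<iota> x * \<iota> y)"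

type_synonym 'n zpvec = "'n \<Rightarrow> nat \<Rightarrow> int"

definition ZpV :: "nat \<Rightarrow> 'n zpvec set" where
  "ZpV p = {x. \<forall>i. x i \<in> Zp p}"

definition zpv_add :: "nat \<Rightarrow> 'n zpvec \<Rightarrow> 'n zpvec \<Rightarrow> 'n zpvec" where
  "zpv_add p x y = (\<lambda>i. zp_add p (x i) (y i))"

text \<open>Action of an integer matrix (F \<otimes> id) on Z_p^n, computed level-wise modulo p^k.\<close>
definition zpv_mat :: "nat \<Rightarrow> int^'n^'n \<Rightarrow> 'n zpvec \<Rightarrow> 'n zpvec" where
  "zpv_mat p F x = (\<lambda>i k. (\<Sum>j\<in>UNIV. F$i$j * x j k) mod int p ^ k)"

definition zpv_smul_int :: "nat \<Rightarrow> int \<Rightarrow> 'n zpvec \<Rightarrow> 'n zpvec" where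
  "zpv_smul_int p c x = (\<lambda>i k. (c * x i k) mod int p ^ k)"

definition zpv_lincomb :: "nat \<Rightarrow> nat \<Rightarrow> (nat \<Rightarrow> nat \<Rightarrow> int) \<Rightarrow> (nat \<Rightarrow> 'n zpvec) \<Rightarrow> 'n zpvec" where
  "zpv_lincomb p r c b = (\<lambda>i k. (\<Sum>l<r. c l k * b l i k) mod int p ^ k)"

definition zp_free_submodule :: "nat \<Rightarrow> 'n zpvec set \<Rightarrow> nat \<Rightarrow> bool" where
  "zp_free_submodule p N r \<longleftrightarrow>
     (\<exists>b. (\<forall>l<r. b l \<in> ZpV p) \<and>
        N = {zpv_lincomb p r c b | c. \<forall>l<r. c l \<in> Zp p} \<and>
        (\<forall>c c'. (\<forall>l<r. c l \<in> Zp p \<and> c' l \<in> Zp p) \<longrightarrow>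
            zpv_lincomb p r c b = zpv_lincomb p r c' b \<longrightarrow> (\<forall>l<r. c l = c' l)))"

definition M4 :: "nat \<Rightarrow> nat \<Rightarrow> int^'n^'n \<Rightarrow> (nat \<Rightarrow> 'n zpvec set) \<Rightarrow> bool" where
  "M4 p q F Ms \<longleftrightarrow>
     zp_free_submodule p (Ms 0) 1 \<and> zp_free_submodule p (Ms 1) 20 \<and> zp_free_submodule p (Ms 2) 1 \<and>
     (\<forall>x\<in>ZpV p. \<exists>!(x0, x1, x2). x0 \<in> Ms 0 \<and> x1 \<in> Ms 1 \<and> x2 \<in> Ms 2 \<and>
         x = zpv_add p x0 (zpv_add p x1 x2)) \<and>
     (\<forall>s\<le>2. zpv_mat p F ` Ms s = zpv_smul_int p (int q ^ s) ` Ms s)"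

definition iota_vec :: "((nat \<Rightarrow> int) \<Rightarrow> complex) \<Rightarrow> 'n zpvec \<Rightarrow> complex^'n" where
  "iota_vec \<iota> x = (\<chi> i. \<iota> (x i))"

definition cspan :: "(complex^'n) set \<Rightarrow> (complex^'n) set" where
  "cspan S = {v. \<exists>T c. finite T \<and> T \<subseteq> S \<and> v = (\<Sum>u\<in>T. c u *s u)}"

text \<open>The image of M^s \<otimes>_{Z_p,iota} C in M \<otimes> C = C^n.\<close>
definition base_change :: "((nat \<Rightarrow> int) \<Rightarrow> complex) \<Rightarrow> 'n zpvec set \<Rightarrow> (complex^'n) set" where
  "base_change \<iota> N = cspan (iota_vec \<iota> ` N)"

definition vcnj :: "complex^'n \<Rightarrow> complex^'n" where
  "vcnj v = (\<chi> i. cnj (v$i))"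

definition csubspace :: "(complex^'n) set \<Rightarrow> bool" where
  "csubspace V \<longleftrightarrow> 0 \<in> V \<and> (\<forall>u\<in>V. \<forall>v\<in>V. u + v \<in> V) \<and> (\<forall>c. \<forall>v\<in>V. c *s v \<in> V)"

text \<open>A Z-Hodge structure of weight w on M = Z^n: a decomposition
  M \<otimes> C = \<Oplus>_{p+q=w} H^{p,q} (H p = H^{p,w-p}, only finitely many nonzero)
  with complex conjugation (w.r.t. the real structure M \<otimes> R) mapping H^{p,q} onto H^{q,p}.\<close>
definition Z_hodge_structure :: "int \<Rightarrow> (int \<Rightarrow> (complex^'n) set) \<Rightarrow> bool" where
  "Z_hodge_structure w H \<longleftrightarrow>
     (\<forall>p. csubspace (H p)) \<and>
     (\<exists>A. finite A \<and> (\<forall>p. p \<notin> A \<longrightarrow> H p = {0}) \<and>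
        (\<forall>v. \<exists>!h. (\<forall>p\<in>A. h p \<in> H p) \<and> (\<forall>p. p \<notin> A \<longrightarrow> h p = 0) \<and> v = (\<Sum>p\<in>A. h p))) \<and>
     (\<forall>p. vcnj ` H p = H (w - p))"

end

theory Submission
  imports Defs
begin

text \<open>
  Let \<open>R = \<iota>(\<int>\<^sub>p)\<close>; it is a subring of \<open>\<complex>\<close> in which \<open>p\<close> is not invertible. Choosing
  \<open>\<iota>\<close>-images of \<open>\<int>\<^sub>p\<close>-bases of \<open>M\<^sup>0, M\<^sup>1, M\<^sup>2\<close> gives a basis \<open>f\<^sub>0, \<dots>, f\<^sub>2\<^sub>1\<close> of \<open>\<complex>\<^sup>2\<^sup>2\<close>
  in which \<open>F\<close> is block diagonal: \<open>F f\<^sub>0 = \<alpha> f\<^sub>0\<close> and \<open>F f\<^sub>2\<^sub>1 = q\<^sup>2\<gamma> f\<^sub>2\<^sub>1\<close> with units \<open>\<alpha>, \<gamma>\<close>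
  of \<open>R\<close>, while \<open>F\<close> acts on the middle block as \<open>q A\<close> with \<open>A\<close> over \<open>R\<close>. An eigenvector whose
  eigenvalue is a unit of \<open>R\<close> has no middle component, because \<open>I - q\<kappa>A\<close> has determinant
  in \<open>1 + pR\<close>, and hence lies on the line \<open>\<complex>f\<^sub>0\<close>. Since all eigenvalues have absolute value
  \<open>q\<close>, complex conjugation sends an eigenvector with eigenvalue \<open>\<lambda>\<close> to one with eigenvalue
  \<open>q\<^sup>2/\<lambda>\<close>. Thus the conjugate of \<open>f\<^sub>2\<^sub>1\<close> has the unit eigenvalue \<open>\<gamma>\<^sup>-\<^sup>1\<close> and is a multiple of
  \<open>f\<^sub>0\<close>, and conjugates of eigenvectors in the middle block stay there; as \<open>F\<close> is
  diagonalizable, the middle block is spanned by such eigenvectors.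
\<close>

section \<open>Complex conjugation and Hodge structures of weight 2\<close>

lemma vcnj_vcnj [simp]: "vcnj (vcnj v) = v"
  by (simp add: vcnj_def vec_eq_iff)

lemma vcnj_add: "vcnj (u + v) = vcnj u + vcnj v"
  by (simp add: vcnj_def vec_eq_iff)

lemma vcnj_scale: "vcnj (c *s v) = cnj c *s vcnj v"
  by (simp add: vcnj_def vec_eq_iff)

lemma vcnj_zero [simp]: "vcnj 0 = 0"
  by (simp add: vcnj_def vec_eq_iff)

lemma vcnj_eq_0_iff [simp]: "vcnj v = 0 \<longleftrightarrow> v = 0"
  by (metis vcnj_vcnj vcnj_zero)

lemma vcnj_sum: "vcnj (sum g S) = (\<Sum>x\<in>S. vcnj (g x))"
  by (induction S rule: infinite_finite_induct) (auto simp: vcnj_add)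

lemma vcnj_in_span: "x \<in> vec.span S \<Longrightarrow> vcnj x \<in> vec.span (vcnj ` S)"
proof (induction rule: vec.span_induct_alt)
  case base
  then show ?case by (simp add: vec.span_zero)
next
  case (step c x y)
  then show ?case by (simp add: vcnj_add vcnj_scale vec.span_add vec.span_scale vec.span_base)
qed

lemma vcnj_span: "vcnj ` vec.span S = vec.span (vcnj ` S)"
proof
  show "vcnj ` vec.span S \<subseteq> vec.span (vcnj ` S)"
    using vcnj_in_span by blast
  show "vec.span (vcnj ` S) \<subseteq> vcnj ` vec.span S"
  proof
    fix x assume "x \<in> vec.span (vcnj ` S)"
    then have "vcnj x \<in> vec.span S"
      using vcnj_in_span[of x "vcnj ` S"] by (simp add: image_image)
    then show "x \<in> vcnj ` vec.span S"
      by (metis image_eqI vcnj_vcnj)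
  qed
qed

lemma complex_mat_mult_vcnj: "complex_mat F *v vcnj v = vcnj (complex_mat F *v v)"
  by (simp add: vec_eq_iff matrix_vector_mult_def vcnj_def complex_mat_def)

lemma span_singleton_scale:
  assumes "c \<noteq> 0"
  shows "vec.span {c *s x} = vec.span {x}"
proof (rule vec.span_eq[THEN iffD2], rule conjI)
  show "{c *s x} \<subseteq> vec.span {x}"
    by (simp add: vec.span_scale vec.span_base)
  have "x = inverse c *s (c *s x)"
    using assms by (simp add: vector_smult_assoc)
  also have "\<dots> \<in> vec.span {c *s x}"
    by (intro vec.span_scale vec.span_base) simp
  finally show "{x} \<subseteq> vec.span {c *s x}"
    by simp
qed

lemma cspan_eq_span: "cspan S = vec.span S"
  by (auto simp: cspan_def vec.span_explicit)

lemma csubspace_span: "csubspace (vec.span S)"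
  unfolding csubspace_def by (auto intro: vec.span_zero vec.span_add vec.span_scale)

lemma diagonalizable_eigenvector_expansion:
  fixes F P :: "'a::field^'n^'n"
  assumes "invertible P" and diag: "F ** P = P ** (\<chi> i j. if i = j then d i else 0)"
  obtains w c where "\<And>j. F *v w j = d j *s w j" and "x = (\<Sum>j\<in>UNIV. c j *s w j)"
proof -
  obtain P' where "P ** P' = mat 1"
    using \<open>invertible P\<close> unfolding invertible_def by blast
  then have "x = P *v (P' *v x)"
    by (simp add: matrix_vector_mul_assoc)
  then have "x = (\<Sum>j\<in>UNIV. (P' *v x)$j *s column j P)"
    by (simp add: matrix_mult_sum)
  moreover
  have "F *v column j P = d j *s column j P" for j
  proof -
    have "(F ** P)$i$j = P$i$j * d j" for i
    proof -
      have "(F ** P)$i$j = (\<Sum>k\<in>UNIV. if k = j then P$i$k * d k else 0)"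
        using diag by (simp add: matrix_matrix_mult_def if_distrib cong: if_cong)
      then show ?thesis by simp
    qed
    then show ?thesis
      by (simp add: vec_eq_iff column_def matrix_vector_mult_def matrix_matrix_mult_def mult.commute)
  qed
  ultimately show ?thesis
    using that[of "\<lambda>j. column j P"] by blast
qed

lemma csubspace_diff:
  assumes "csubspace V" "x \<in> V" "y \<in> V"
  shows "x - y \<in> V"
proof -
  have "x + (-1) *s y \<in> V"
    using assms unfolding csubspace_def by blast
  moreover have "(-1) *s y = - y"
    by (simp add: vec_eq_iff)
  ultimately show ?thesis
    by simp
qed

lemma Z_hodge_structure_weight_2I:
  fixes V :: "nat \<Rightarrow> (complex^'n) set"
  assumes subspace: "\<And>s. csubspace (V s)"
    and spanning: "\<And>v. \<exists>x0 x1 x2. x0 \<in> V 0 \<and> x1 \<in> V 1 \<and> x2 \<in> V 2 \<and> v = x0 + x1 + x2"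
    and independent: "\<And>x0 x1 x2. x0 \<in> V 0 \<Longrightarrow> x1 \<in> V 1 \<Longrightarrow> x2 \<in> V 2 \<Longrightarrow>
      x0 + x1 + x2 = 0 \<Longrightarrow> x0 = 0 \<and> x1 = 0 \<and> x2 = 0"
    and conj: "\<And>s. s \<le> 2 \<Longrightarrow> vcnj ` V s = V (2 - s)"
  shows "Z_hodge_structure 2 (\<lambda>k. if k \<in> {0,1,2} then V (nat k) else {0})"
    (is "Z_hodge_structure 2 ?H")
  unfolding Z_hodge_structure_def
proof (intro conjI allI exI[of _ "{0,1,2}"])
  show "csubspace (?H k)" for k
    using subspace by (simp add: csubspace_def)
  show "vcnj ` ?H k = ?H (2 - k)" for k
  proof (cases "k \<in> {0,1,2}")
    case True
    then have "nat (2 - k) = 2 - nat k" "nat k \<le> 2" "2 - k \<in> {0,1,2}"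
      by auto
    then show ?thesis
      using True conj by simp
  qed auto
  show "\<exists>!h. (\<forall>k\<in>{0,1,2}. h k \<in> ?H k) \<and> (\<forall>k. k \<notin> {0,1,2} \<longrightarrow> h k = 0) \<and> v = sum h {0,1,2}"
    for v
  proof -
    have sum3: "sum h {0,1,2::int} = h 0 + h 1 + h 2" for h :: "int \<Rightarrow> complex^'n"
      by simp
    obtain x0 x1 x2 where x: "x0 \<in> V 0" "x1 \<in> V 1" "x2 \<in> V 2" "v = x0 + x1 + x2"
      using spanning by blast
    show ?thesis
    proof (rule ex1I[of _ "\<lambda>k. if k = 0 then x0 else if k = 1 then x1 else if k = 2 then x2 else 0"])
      fix h
      assume h: "(\<forall>k\<in>{0,1,2}. h k \<in> ?H k) \<and> (\<forall>k. k \<notin> {0,1,2} \<longrightarrow> h k = 0) \<and> v = sum h {0,1,2}"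
      then have "(h 0 - x0) + (h 1 - x1) + (h 2 - x2) = 0"
        using x(4) by (simp add: sum3 algebra_simps)
      moreover have "h 0 - x0 \<in> V 0" "h 1 - x1 \<in> V 1" "h 2 - x2 \<in> V 2"
        using h x subspace by (auto intro: csubspace_diff)
      ultimately have "h 0 = x0" "h 1 = x1" "h 2 = x2"
        using independent[of "h 0 - x0" "h 1 - x1" "h 2 - x2"] by auto
      then show "h = (\<lambda>k. if k = 0 then x0 else if k = 1 then x1 else if k = 2 then x2 else 0)"
        using h by (auto intro!: ext)
    qed (use x in \<open>auto simp: sum3\<close>)
  qed
qed (simp_all)

section \<open>Coordinates with respect to a basis\<close>

locale spanning_family =
  fixes f :: "nat \<Rightarrow> complex^'n" and n :: nat
  assumes card_eq: "CARD('n) = n" and span_eq_UNIV: "vec.span (f ` {..<n}) = UNIV"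
begin

lemma card_image_ge: "card (f ` {..<n}) \<ge> n"
proof -
  have "vec.dim (UNIV :: (complex^'n) set) \<le> card (f ` {..<n})"
    by (rule vec.span_card_ge_dim) (use span_eq_UNIV in auto)
  then show ?thesis
    using card_eq by (simp add: vec_dim_card card_cart_basis)
qed

lemma independent: "vec.independent (f ` {..<n})"
  by (rule vec.card_le_dim_spanning[of _ UNIV])
    (use span_eq_UNIV card_image_le[of "{..<n}" f] card_eq in \<open>auto simp: vec_dim_card card_cart_basis\<close>)

lemma inj_on: "inj_on f {..<n}"
  using card_image_ge card_image_le[of "{..<n}" f] by (simp add: inj_on_iff_eq_card)

lemma sum_image: "S \<subseteq> {..<n} \<Longrightarrow> (\<Sum>v\<in>f ` S. g v) = (\<Sum>j\<in>S. g (f j))"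
  using inj_on by (simp add: sum.reindex inj_on_subset)

lemma lincomb_eq_0_imp:
  assumes "(\<Sum>j<n. a j *s f j) = 0" "j < n"
  shows "a j = 0"
proof (rule ccontr)
  assume "a j \<noteq> 0"
  define u where "u v = a (the_inv_into {..<n} f v)" for v
  have u: "k < n \<Longrightarrow> u (f k) = a k" for k
    unfolding u_def using inj_on by (simp add: the_inv_into_f_f)
  have "(\<Sum>v\<in>f ` {..<n}. u v *s v) = (\<Sum>k<n. a k *s f k)"
    by (simp add: sum_image u)
  then have "(\<Sum>v\<in>f ` {..<n}. u v *s v) = 0"
    using assms by simp
  moreover have "\<exists>v\<in>f ` {..<n}. u v \<noteq> 0"
    using \<open>a j \<noteq> 0\<close> assms(2) u by force
  ultimately have "vec.dependent (f ` {..<n})"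
    by (subst vec.dependent_finite) auto
  then show False
    using independent by simp
qed

lemma lincomb_exists: "\<exists>a. y = (\<Sum>j<n. a j *s f j)"
proof -
  have "y \<in> vec.span (f ` {..<n})"
    using span_eq_UNIV by simp
  then obtain u where "y = (\<Sum>v\<in>f ` {..<n}. u v *s v)"
    by (auto simp: vec.span_finite)
  then show ?thesis
    by (auto simp: sum_image)
qed

definition coord :: "complex^'n \<Rightarrow> nat \<Rightarrow> complex" where
  "coord y = (SOME a. y = (\<Sum>j<n. a j *s f j))"

lemma coord_expansion: "y = (\<Sum>j<n. coord y j *s f j)"
  unfolding coord_def using someI_ex[OF lincomb_exists[of y]] .

lemma coord_unique:
  assumes "y = (\<Sum>j<n. a j *s f j)" "j < n"
  shows "coord y j = a j"
proof -
  have "(\<Sum>j<n. (coord y j - a j) *s f j) = 0"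
    using coord_expansion[of y] assms(1) by (simp add: vector_sub_rdistrib sum_subtractf)
  then show ?thesis
    using lincomb_eq_0_imp[of "\<lambda>j. coord y j - a j" j] assms(2) by simp
qed

lemma coord_add: "j < n \<Longrightarrow> coord (x + y) j = coord x j + coord y j"
proof (rule coord_unique)
  have "x + y = (\<Sum>j<n. coord x j *s f j) + (\<Sum>j<n. coord y j *s f j)"
    using coord_expansion by simp
  then show "x + y = (\<Sum>j<n. (coord x j + coord y j) *s f j)"
    by (simp add: vec.scale_left_distrib sum.distrib)
qed

lemma coord_scale: "j < n \<Longrightarrow> coord (c *s x) j = c * coord x j"
proof (rule coord_unique)
  show "c *s x = (\<Sum>j<n. (c * coord x j) *s f j)"
    by (subst coord_expansion[of x]) (simp add: vec.scale_sum_right vector_smult_assoc)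
qed

lemma coord_zero [simp]: "j < n \<Longrightarrow> coord 0 j = 0"
  using coord_scale[of j 0 0] by simp

lemma coord_sum: "finite A \<Longrightarrow> j < n \<Longrightarrow> coord (\<Sum>i\<in>A. g i) j = (\<Sum>i\<in>A. coord (g i) j)"
  by (induction A rule: finite_induct) (simp_all add: coord_add)

lemma coord_basis: "j < n \<Longrightarrow> k < n \<Longrightarrow> coord (f k) j = (if j = k then 1 else 0)"
  by (rule coord_unique) (auto simp: if_distrib[of "\<lambda>c. c *s _"] cong: if_cong)

lemma coord_eqI: "(\<And>j. j < n \<Longrightarrow> coord x j = coord y j) \<Longrightarrow> x = y"
  by (metis (no_types, lifting) coord_expansion lessThan_iff sum.cong)

lemma basis_nonzero: "j < n \<Longrightarrow> f j \<noteq> 0"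
  using coord_basis[of j j] by auto

lemma span_basis_subset:
  assumes "S \<subseteq> {..<n}"
  shows "vec.span (f ` S) = {y. \<forall>j<n. j \<notin> S \<longrightarrow> coord y j = 0}"
proof safe
  fix y j assume "y \<in> vec.span (f ` S)" "j < n" "j \<notin> S"
  moreover have "finite S"
    using assms finite_subset by blast
  ultimately obtain u where "y = (\<Sum>v\<in>f ` S. u v *s v)"
    by (auto simp: vec.span_finite)
  also have "\<dots> = (\<Sum>k\<in>S. u (f k) *s f k)"
    using assms by (rule sum_image)
  also have "\<dots> = (\<Sum>k<n. (if k \<in> S then u (f k) else 0) *s f k)"
    using assms by (simp add: if_distrib[of "\<lambda>c. c *s _"] sum.If_cases Int_absorb1 cong: if_cong)
  finally show "coord y j = 0"
    using coord_unique \<open>j < n\<close> \<open>j \<notin> S\<close> by simp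
next
  fix y assume "\<forall>j<n. j \<notin> S \<longrightarrow> coord y j = 0"
  then have "y = (\<Sum>j\<in>S. coord y j *s f j)"
    using assms coord_expansion[of y] by (simp add: sum.mono_neutral_right)
  also have "\<dots> \<in> vec.span (f ` S)"
    by (intro vec.span_sum vec.span_scale vec.span_base imageI)
  finally show "y \<in> vec.span (f ` S)" .
qed

end

section \<open>The image of \<open>\<int>\<^sub>p\<close> under \<open>\<iota>\<close>\<close>

locale zp_embedding =
  fixes p :: nat and \<iota> :: "(nat \<Rightarrow> int) \<Rightarrow> complex"
  assumes p_gt_1: "p > 1" and embedding: "ring_embedding p \<iota>"
begin

definition zp_of_int :: "int \<Rightarrow> nat \<Rightarrow> int" where
  "zp_of_int n = (\<lambda>k. n mod int p ^ k)"

lemma mod_powers_in_Zp: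
  assumes "\<And>k. f (Suc k) mod int p ^ k = f k mod int p ^ k"
  shows "(\<lambda>k. f k mod int p ^ k) \<in> Zp p"
proof -
  have "f (Suc k) mod int p ^ Suc k mod int p ^ k = f k mod int p ^ k" for k
    using assms[of k] by (simp add: mod_mod_cancel)
  then show ?thesis
    unfolding Zp_def using p_gt_1 by (auto simp: pos_mod_bound)
qed

lemma Zp_compatible: "x \<in> Zp p \<Longrightarrow> x (Suc k) mod int p ^ k = x k mod int p ^ k"
  unfolding Zp_def by auto

lemma zp_of_int_in_Zp [simp]: "zp_of_int n \<in> Zp p"
  unfolding zp_of_int_def by (rule mod_powers_in_Zp) simp

lemma zp_add_in_Zp: "x \<in> Zp p \<Longrightarrow> y \<in> Zp p \<Longrightarrow> zp_add p x y \<in> Zp p"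
  unfolding zp_add_def by (rule mod_powers_in_Zp) (metis Zp_compatible mod_add_eq)

lemma zp_mult_in_Zp: "x \<in> Zp p \<Longrightarrow> y \<in> Zp p \<Longrightarrow> zp_mult p x y \<in> Zp p"
  unfolding zp_mult_def by (rule mod_powers_in_Zp) (metis Zp_compatible mod_mult_eq)

lemma iota_add: "x \<in> Zp p \<Longrightarrow> y \<in> Zp p \<Longrightarrow> \<iota> (zp_add p x y) = \<iota> x + \<iota> y"
  using embedding unfolding ring_embedding_def by auto

lemma iota_mult: "x \<in> Zp p \<Longrightarrow> y \<in> Zp p \<Longrightarrow> \<iota> (zp_mult p x y) = \<iota> x * \<iota> y"
  using embedding unfolding ring_embedding_def by auto

lemma iota_inj: "x \<in> Zp p \<Longrightarrow> y \<in> Zp p \<Longrightarrow> \<iota> x = \<iota> y \<Longrightarrow> x = y"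
  using embedding unfolding ring_embedding_def inj_on_def by auto

lemma iota_zp_of_int_add: "\<iota> (zp_of_int (m + n)) = \<iota> (zp_of_int m) + \<iota> (zp_of_int n)"
proof -
  have "zp_add p (zp_of_int m) (zp_of_int n) = zp_of_int (m + n)"
    unfolding zp_add_def zp_of_int_def by (auto simp: mod_add_eq)
  then show ?thesis
    by (metis iota_add zp_of_int_in_Zp)
qed

lemma iota_zp_of_int [simp]: "\<iota> (zp_of_int n) = of_int n"
proof -
  have zero: "\<iota> (zp_of_int 0) = 0"
    using iota_zp_of_int_add[of 0 0] by simp
  have one: "\<iota> (zp_of_int 1) = 1"
    using embedding unfolding ring_embedding_def zp_one_def zp_of_int_def by auto
  have nat: "\<iota> (zp_of_int (int k)) = of_nat k" for k
    by (induction k) (simp_all add: zero one iota_zp_of_int_add add.commute)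
  show ?thesis
  proof (cases "n \<ge> 0")
    case True
    then show ?thesis by (metis nat nonneg_int_cases of_int_of_nat_eq)
  next
    case False
    then obtain k where k: "n = - int k"
      by (metis linorder_not_le neg_int_cases less_imp_le)
    have "\<iota> (zp_of_int n) + of_nat k = \<iota> (zp_of_int (n + int k))"
      using iota_zp_of_int_add[of n "int k"] nat[of k] by simp
    also have "\<dots> = 0"
      using k zero by simp
    finally have "\<iota> (zp_of_int n) = - of_nat k"
      by (simp add: eq_neg_iff_add_eq_0)
    with k show ?thesis
      by simp
  qed
qed

lemma zp_mult_zp_of_int: "(\<lambda>k. (c * x k) mod int p ^ k) = zp_mult p (zp_of_int c) x"
  unfolding zp_mult_def zp_of_int_def by (auto simp: mod_mult_left_eq)

lemma iota_scale_mod: "x \<in> Zp p \<Longrightarrow> \<iota> (\<lambda>k. (c * x k) mod int p ^ k) = of_int c * \<iota> x"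
  by (simp add: zp_mult_zp_of_int iota_mult)

lemma iota_sum_mod:
  assumes "finite S" "\<And>j. j \<in> S \<Longrightarrow> (\<lambda>k. h j k mod int p ^ k) \<in> Zp p"
  shows "(\<lambda>k. (\<Sum>j\<in>S. h j k) mod int p ^ k) \<in> Zp p \<and>
    \<iota> (\<lambda>k. (\<Sum>j\<in>S. h j k) mod int p ^ k) = (\<Sum>j\<in>S. \<iota> (\<lambda>k. h j k mod int p ^ k))"
  using assms
proof (induction S rule: finite_induct)
  case empty
  have "(\<lambda>k. (0::int) mod int p ^ k) = zp_of_int 0"
    by (simp add: zp_of_int_def)
  then show ?case by simp
next
  case (insert i S)
  have "(\<lambda>k. (\<Sum>j\<in>insert i S. h j k) mod int p ^ k) =
      zp_add p (\<lambda>k. h i k mod int p ^ k) (\<lambda>k. (\<Sum>j\<in>S. h j k) mod int p ^ k)"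
    using insert(1,2) by (auto simp: zp_add_def mod_add_eq intro!: ext)
  then show ?case
    using insert by (simp add: iota_add zp_add_in_Zp)
qed

definition iota_ring :: "complex set" where
  "iota_ring = \<iota> ` Zp p"

lemma of_int_in_iota_ring [simp]: "of_int n \<in> iota_ring"
  unfolding iota_ring_def by (metis iota_zp_of_int zp_of_int_in_Zp image_eqI)

lemma of_nat_in_iota_ring [simp]: "of_nat n \<in> iota_ring"
  by (metis of_int_in_iota_ring of_int_of_nat_eq)

lemma zero_in_iota_ring [simp]: "0 \<in> iota_ring" and one_in_iota_ring [simp]: "1 \<in> iota_ring"
  using of_int_in_iota_ring[of 0] of_int_in_iota_ring[of 1] by simp_all

lemma iota_ring_add [simp]: "x \<in> iota_ring \<Longrightarrow> y \<in> iota_ring \<Longrightarrow> x + y \<in> iota_ring"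
  unfolding iota_ring_def by (auto simp: iota_add[symmetric] intro: zp_add_in_Zp)

lemma iota_ring_mult [simp]: "x \<in> iota_ring \<Longrightarrow> y \<in> iota_ring \<Longrightarrow> x * y \<in> iota_ring"
  unfolding iota_ring_def by (auto simp: iota_mult[symmetric] intro: zp_mult_in_Zp)

lemma iota_ring_uminus [simp]: "x \<in> iota_ring \<Longrightarrow> - x \<in> iota_ring"
  using iota_ring_mult[OF of_int_in_iota_ring[of "-1"]] by simp

lemma iota_ring_prod: "(\<And>i. i \<in> S \<Longrightarrow> f i \<in> iota_ring) \<Longrightarrow> prod f S \<in> iota_ring"
  by (induction S rule: infinite_finite_induct) auto

lemma p_not_invertible_in_iota_ring: "r \<in> iota_ring \<Longrightarrow> of_nat p * r \<noteq> 1"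
proof
  assume r: "r \<in> iota_ring" and inverse: "of_nat p * r = 1"
  then obtain y where y: "y \<in> Zp p" "r = \<iota> y"
    unfolding iota_ring_def by auto
  have "\<iota> (zp_mult p (zp_of_int (int p)) y) = \<iota> (zp_of_int 1)"
    using inverse y by (simp add: iota_mult)
  then have "zp_mult p (zp_of_int (int p)) y = zp_of_int 1"
    using y by (intro iota_inj) (auto intro: zp_mult_in_Zp)
  then have "zp_mult p (zp_of_int (int p)) y 1 = zp_of_int 1 1"
    by simp
  then show False
    using p_gt_1 by (simp add: zp_mult_def zp_of_int_def)
qed

lemma prod_perturbation:
  assumes "finite S" "\<mu> \<in> iota_ring" "\<And>i. i \<in> S \<Longrightarrow> x i \<in> iota_ring \<and> y i \<in> iota_ring"
  shows "\<exists>r\<in>iota_ring. (\<Prod>i\<in>S. x i + \<mu> * y i) = (\<Prod>i\<in>S. x i) + \<mu> * r"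
  using assms
proof (induction S rule: finite_induct)
  case empty
  then show ?case by (intro bexI[of _ 0]) auto
next
  case (insert i S)
  then obtain r where r: "r \<in> iota_ring" "(\<Prod>i\<in>S. x i + \<mu> * y i) = (\<Prod>i\<in>S. x i) + \<mu> * r"
    by auto
  have "(\<Prod>i\<in>S. x i) \<in> iota_ring"
    using insert by (auto intro: iota_ring_prod)
  then show ?case
    using insert r
    by (intro bexI[of _ "x i * r + y i * ((\<Prod>i\<in>S. x i) + \<mu> * r)"]) (auto simp: algebra_simps)
qed

lemma sum_perturbation:
  assumes "finite S" "\<And>i. i \<in> S \<Longrightarrow> \<exists>r\<in>iota_ring. a i = b i + \<mu> * r"
  shows "\<exists>r\<in>iota_ring. (\<Sum>i\<in>S. a i) = (\<Sum>i\<in>S. b i) + \<mu> * r"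
  using assms
proof (induction S rule: finite_induct)
  case empty
  then show ?case by (intro bexI[of _ 0]) auto
next
  case (insert i S)
  then obtain r where "r \<in> iota_ring" "(\<Sum>i\<in>S. a i) = (\<Sum>i\<in>S. b i) + \<mu> * r"
    by auto
  moreover obtain r' where "r' \<in> iota_ring" "a i = b i + \<mu> * r'"
    using insert by auto
  ultimately show ?case
    using insert(1,2)
    by (intro bexI[of _ "r + r'"]) (auto simp: algebra_simps)
qed

lemma det_perturbation:
  fixes N K :: "complex^'m^'m"
  assumes "\<mu> \<in> iota_ring" "\<And>i j. N$i$j \<in> iota_ring" "\<And>i j. K$i$j \<in> iota_ring"
  shows "\<exists>r\<in>iota_ring. det (\<chi> i j. N$i$j + \<mu> * K$i$j) = det N + \<mu> * r"
  unfolding det_def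
proof (rule sum_perturbation)
  fix \<pi> assume "\<pi> \<in> {\<pi>. \<pi> permutes (UNIV::'m set)}"
  obtain r where "r \<in> iota_ring"
    "(\<Prod>i\<in>UNIV. N$i$\<pi> i + \<mu> * K$i$\<pi> i) = (\<Prod>i\<in>UNIV. N$i$\<pi> i) + \<mu> * r"
    using prod_perturbation[of UNIV \<mu> "\<lambda>i. N$i$\<pi> i" "\<lambda>i. K$i$\<pi> i"] assms by auto
  then show "\<exists>r\<in>iota_ring. of_int (sign \<pi>) * (\<Prod>i\<in>UNIV. (\<chi> i j. N$i$j + \<mu> * K$i$j) $ i $ \<pi> i) =
      of_int (sign \<pi>) * (\<Prod>i\<in>UNIV. N $ i $ \<pi> i) + \<mu> * r"
    by (intro bexI[of _ "of_int (sign \<pi>) * r"]) (auto simp: algebra_simps)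
qed (simp add: finite_permutations)

text \<open>The matrix \<open>I - p t N\<close> has determinant in \<open>1 + pR\<close>, which is nonzero as \<open>p\<close> is not a
  unit of \<open>R\<close>.\<close>
lemma eq_p_multiple_imp_zero:
  fixes N :: "complex^'m^'m" and v :: "complex^'m"
  assumes N: "\<And>i j. N$i$j \<in> iota_ring" and t: "t \<in> iota_ring"
    and v: "v = (of_nat p * t) *s (N *v v)"
  shows "v = 0"
proof (rule ccontr)
  assume "v \<noteq> 0"
  define D where "D = (\<chi> i j. (mat 1 :: complex^'m^'m)$i$j + (- (of_nat p * t)) * N$i$j)"
  have diag: "(\<Sum>j\<in>UNIV. v$j * (if i = j then 1 else 0)) = v$i" for i
  proof -
    have "(\<Sum>j\<in>UNIV. v$j * (if i = j then 1 else 0)) = (\<Sum>j\<in>UNIV. if i = j then v$j else 0)"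
      by (intro sum.cong) auto
    then show ?thesis
      by simp
  qed
  have "D *v v = v - (of_nat p * t) *s (N *v v)"
    by (simp add: D_def vec_eq_iff matrix_vector_mult_def mat_def algebra_simps sum.distrib
        sum_distrib_left sum_subtractf diag)
  then have "D *v v = 0"
    using v by simp
  have "det D = 0"
  proof (rule ccontr)
    assume "det D \<noteq> 0"
    then obtain D' where "D' ** D = mat 1"
      using invertible_det_nz[of D] unfolding invertible_def by auto
    then have "v = D' *v (D *v v)"
      by (simp add: matrix_vector_mul_assoc)
    with \<open>D *v v = 0\<close> \<open>v \<noteq> 0\<close> show False
      by simp
  qed
  moreover have "(mat 1 :: complex^'m^'m)$i$j \<in> iota_ring" for i j
    by (simp add: mat_def)
  moreover have "- (of_nat p * t) \<in> iota_ring"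
    using t by simp
  ultimately obtain r where "r \<in> iota_ring" "det (mat 1 :: complex^'m^'m) + (- (of_nat p * t)) * r = 0"
    using det_perturbation[of "- (of_nat p * t)" "mat 1" N] N unfolding D_def by metis
  then have "of_nat p * (t * r) = 1"
    by (simp add: algebra_simps)
  then show False
    using p_not_invertible_in_iota_ring[of "t * r"] t \<open>r \<in> iota_ring\<close> by simp
qed

lemma iota_vec_zpv_add:
  "x \<in> ZpV p \<Longrightarrow> y \<in> ZpV p \<Longrightarrow>
    zpv_add p x y \<in> ZpV p \<and> iota_vec \<iota> (zpv_add p x y) = iota_vec \<iota> x + iota_vec \<iota> y"
  by (simp add: iota_vec_def zpv_add_def iota_add zp_add_in_Zp ZpV_def vec_eq_iff)

lemma iota_vec_zpv_mat:
  fixes F :: "int^'n^'n"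
  assumes x: "x \<in> ZpV p"
  shows "zpv_mat p F x \<in> ZpV p \<and> iota_vec \<iota> (zpv_mat p F x) = complex_mat F *v iota_vec \<iota> x"
proof -
  have "(\<lambda>k. (\<Sum>j\<in>UNIV. F$i$j * x j k) mod int p ^ k) \<in> Zp p \<and>
      \<iota> (\<lambda>k. (\<Sum>j\<in>UNIV. F$i$j * x j k) mod int p ^ k) = (\<Sum>j\<in>UNIV. of_int (F$i$j) * \<iota> (x j))"
    for i
  proof -
    have "(\<lambda>k. (F$i$j * x j k) mod int p ^ k) \<in> Zp p" for j
      using x by (simp add: ZpV_def zp_mult_zp_of_int zp_mult_in_Zp)
    from iota_sum_mod[of UNIV "\<lambda>j k. F$i$j * x j k", OF _ this] show ?thesis
      using x by (simp add: ZpV_def iota_scale_mod)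
  qed
  then show ?thesis
    by (auto simp: ZpV_def zpv_mat_def iota_vec_def vec_eq_iff matrix_vector_mult_def complex_mat_def)
qed

lemma iota_vec_zpv_smul_int:
  "x \<in> ZpV p \<Longrightarrow>
    zpv_smul_int p c x \<in> ZpV p \<and> iota_vec \<iota> (zpv_smul_int p c x) = of_int c *s iota_vec \<iota> x"
  by (auto simp: ZpV_def zpv_smul_int_def iota_vec_def vec_eq_iff zp_mult_zp_of_int
      zp_mult_in_Zp iota_mult)

lemma iota_vec_zpv_lincomb:
  assumes "\<And>l. l < r \<Longrightarrow> c l \<in> Zp p \<and> b l \<in> ZpV p"
  shows "zpv_lincomb p r c b \<in> ZpV p \<and>
    iota_vec \<iota> (zpv_lincomb p r c b) = (\<Sum>l<r. \<iota> (c l) *s iota_vec \<iota> (b l))"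
proof -
  have "(\<lambda>k. (\<Sum>l<r. c l k * b l i k) mod int p ^ k) \<in> Zp p \<and>
      \<iota> (\<lambda>k. (\<Sum>l<r. c l k * b l i k) mod int p ^ k) = (\<Sum>l<r. \<iota> (c l) * \<iota> (b l i))" for i
  proof -
    have mult: "l < r \<Longrightarrow> (\<lambda>k. (c l k * b l i k) mod int p ^ k) = zp_mult p (c l) (b l i)" for l
      by (simp add: zp_mult_def)
    show ?thesis
      using iota_sum_mod[of "{..<r}" "\<lambda>l k. c l k * b l i k"] assms mult
      by (simp add: iota_mult zp_mult_in_Zp ZpV_def)
  qed
  then show ?thesis
    by (auto simp: ZpV_def zpv_lincomb_def iota_vec_def vec_eq_iff)
qed

definition iota_generators :: "'n zpvec set \<Rightarrow> nat \<Rightarrow> (nat \<Rightarrow> complex^'n) \<Rightarrow> bool" where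
  "iota_generators N r e \<longleftrightarrow>
    (\<forall>y\<in>N. y \<in> ZpV p \<and> (\<exists>g. (\<forall>l<r. g l \<in> iota_ring) \<and> iota_vec \<iota> y = (\<Sum>l<r. g l *s e l))) \<and>
    (\<forall>l<r. \<exists>y\<in>N. iota_vec \<iota> y = e l)"

lemma iota_generators_exist:
  assumes "zp_free_submodule p N r"
  obtains e where "iota_generators N r e"
proof -
  obtain b where b: "\<forall>l<r. b l \<in> ZpV p" and N: "N = {zpv_lincomb p r c b | c. \<forall>l<r. c l \<in> Zp p}"
    using assms unfolding zp_free_submodule_def by blast
  define e where "e l = iota_vec \<iota> (b l)" for l
  have "\<forall>y\<in>N. y \<in> ZpV p \<and> (\<exists>g. (\<forall>l<r. g l \<in> iota_ring) \<and> iota_vec \<iota> y = (\<Sum>l<r. g l *s e l))"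
  proof
    fix y assume "y \<in> N"
    then obtain c where c: "\<forall>l<r. c l \<in> Zp p" and y: "y = zpv_lincomb p r c b"
      using N by auto
    show "y \<in> ZpV p \<and> (\<exists>g. (\<forall>l<r. g l \<in> iota_ring) \<and> iota_vec \<iota> y = (\<Sum>l<r. g l *s e l))"
      using iota_vec_zpv_lincomb[of r c b] c b unfolding y e_def
      by (intro conjI exI[of _ "\<lambda>l. \<iota> (c l)"]) (auto simp: iota_ring_def)
  qed
  moreover have "\<forall>l<r. \<exists>y\<in>N. iota_vec \<iota> y = e l"
  proof (intro allI impI)
    fix l assume "l < r"
    define c where "c l' = (if l' = l then zp_of_int 1 else zp_of_int 0)" for l'
    have c: "\<forall>l<r. c l \<in> Zp p"
      by (simp add: c_def)
    have "iota_vec \<iota> (zpv_lincomb p r c b) = (\<Sum>l'<r. \<iota> (c l') *s e l')"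
      using iota_vec_zpv_lincomb[of r c b] b c unfolding e_def by auto
    also have "\<dots> = (\<Sum>l'<r. if l' = l then e l' else 0)"
      by (intro sum.cong) (auto simp: c_def)
    also have "\<dots> = e l"
      using \<open>l < r\<close> by simp
    finally show "\<exists>y\<in>N. iota_vec \<iota> y = e l"
      using N c by blast
  qed
  ultimately show ?thesis
    using that unfolding iota_generators_def by blast
qed

lemma iota_generators_ZpV: "iota_generators N r e \<Longrightarrow> y \<in> N \<Longrightarrow> y \<in> ZpV p"
  unfolding iota_generators_def by blast

lemma base_change_iota_generators:
  assumes gen: "iota_generators N r e"
  shows "base_change \<iota> N = vec.span (e ` {..<r})"
  unfolding base_change_def cspan_eq_span
proof (rule vec.span_eq[THEN iffD2], rule conjI)
  show "iota_vec \<iota> ` N \<subseteq> vec.span (e ` {..<r})"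
  proof
    fix x assume "x \<in> iota_vec \<iota> ` N"
    then obtain g where "x = (\<Sum>l<r. g l *s e l)"
      using gen unfolding iota_generators_def by blast
    then show "x \<in> vec.span (e ` {..<r})"
      by (simp, intro vec.span_sum vec.span_scale vec.span_base) auto
  qed
  show "e ` {..<r} \<subseteq> vec.span (iota_vec \<iota> ` N)"
  proof
    fix x assume "x \<in> e ` {..<r}"
    then have "x \<in> iota_vec \<iota> ` N"
      using gen unfolding iota_generators_def by force
    then show "x \<in> vec.span (iota_vec \<iota> ` N)"
      by (rule vec.span_base)
  qed
qed

lemma iota_generators_matrix_image:
  fixes F :: "int^'n^'n"
  assumes gen: "iota_generators N r e" and FN: "zpv_mat p F ` N = zpv_smul_int p c ` N"
    and "l < r"
  obtains g h where "\<forall>m<r. g m \<in> iota_ring" "complex_mat F *v e l = of_int c *s (\<Sum>m<r. g m *s e m)"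
    and "\<forall>m<r. h m \<in> iota_ring" "of_int c *s e l = complex_mat F *v (\<Sum>m<r. h m *s e m)"
proof -
  obtain y where y: "y \<in> N" "iota_vec \<iota> y = e l"
    using gen \<open>l < r\<close> unfolding iota_generators_def by metis
  have yZ: "y \<in> ZpV p"
    using gen y(1) by (rule iota_generators_ZpV)
  obtain y' where y': "y' \<in> N" "zpv_mat p F y = zpv_smul_int p c y'"
    using FN y(1) by (metis imageE imageI)
  obtain g where g: "\<forall>m<r. g m \<in> iota_ring" "iota_vec \<iota> y' = (\<Sum>m<r. g m *s e m)"
    using gen y'(1) unfolding iota_generators_def by blast
  have "complex_mat F *v e l = iota_vec \<iota> (zpv_mat p F y)"
    using iota_vec_zpv_mat[OF yZ, of F] y by simp
  also have "\<dots> = of_int c *s (\<Sum>m<r. g m *s e m)"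
    using iota_vec_zpv_smul_int[OF iota_generators_ZpV[OF gen y'(1)], of c] y' g by simp
  finally have Fe: "complex_mat F *v e l = of_int c *s (\<Sum>m<r. g m *s e m)" .
  obtain z where z: "z \<in> N" "zpv_smul_int p c y = zpv_mat p F z"
    using FN y(1) by (metis imageE imageI)
  obtain h where h: "\<forall>m<r. h m \<in> iota_ring" "iota_vec \<iota> z = (\<Sum>m<r. h m *s e m)"
    using gen z(1) unfolding iota_generators_def by blast
  have "of_int c *s e l = iota_vec \<iota> (zpv_smul_int p c y)"
    using iota_vec_zpv_smul_int[OF yZ, of c] y by simp
  also have "\<dots> = complex_mat F *v (\<Sum>m<r. h m *s e m)"
    using iota_vec_zpv_mat[OF iota_generators_ZpV[OF gen z(1)], of F] z h by simp
  finally show ?thesis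
    using that g Fe h by blast
qed

lemma iota_generators_matrix:
  fixes F :: "int^'n^'n"
  assumes gen: "iota_generators N r e" and FN: "zpv_mat p F ` N = zpv_smul_int p c ` N"
  obtains A where "\<And>l m. A l m \<in> iota_ring"
    "\<And>l. l < r \<Longrightarrow> complex_mat F *v e l = of_int c *s (\<Sum>m<r. A l m *s e m)"
proof -
  have "\<forall>l<r. \<exists>g. (\<forall>m<r. g m \<in> iota_ring) \<and> complex_mat F *v e l = of_int c *s (\<Sum>m<r. g m *s e m)"
    using iota_generators_matrix_image[OF gen FN] by metis
  then obtain A0 where A0: "\<forall>l<r. (\<forall>m<r. A0 l m \<in> iota_ring) \<and>
      complex_mat F *v e l = of_int c *s (\<Sum>m<r. A0 l m *s e m)"
    by metis
  define A where "A l m = (if l < r \<and> m < r then A0 l m else 0)" for l m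
  have "A l m \<in> iota_ring" for l m
    using A0 by (simp add: A_def)
  moreover have "complex_mat F *v e l = of_int c *s (\<Sum>m<r. A l m *s e m)" if "l < r" for l
    using A0 that by (simp add: A_def)
  ultimately show ?thesis
    by (rule that)
qed

lemma rank_one_eigenvector:
  fixes F :: "int^'n^'n"
  assumes gen: "iota_generators N 1 e" and FN: "zpv_mat p F ` N = zpv_smul_int p c ` N"
    and "e 0 \<noteq> 0" "c \<noteq> 0"
  obtains u v where "u \<in> iota_ring" "v \<in> iota_ring" "u * v = 1"
    "complex_mat F *v e 0 = (of_int c * u) *s e 0"
proof -
  obtain g h where "\<forall>m<1. g m \<in> iota_ring" "complex_mat F *v e 0 = of_int c *s (\<Sum>m<1. g m *s e m)"
    and "\<forall>m<1. h m \<in> iota_ring" "of_int c *s e 0 = complex_mat F *v (\<Sum>m<1. h m *s e m)"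
    using iota_generators_matrix_image[OF gen FN, of 0] by auto
  then have g: "g 0 \<in> iota_ring" "complex_mat F *v e 0 = (of_int c * g 0) *s e 0"
    and h: "h 0 \<in> iota_ring" "of_int c *s e 0 = complex_mat F *v (h 0 *s e 0)"
    by (simp_all add: vector_smult_assoc)
  have "(of_int c * 1) *s e 0 = (of_int c * (g 0 * h 0)) *s e 0"
    using h(2) g(2) by (simp add: vec.scale vector_smult_assoc algebra_simps)
  then have "g 0 * h 0 = 1"
    using \<open>e 0 \<noteq> 0\<close> \<open>c \<noteq> 0\<close> by simp
  then show ?thesis
    by (rule that[OF g(1) h(1) _ g(2)])
qed

lemma span_base_change_summands:
  fixes N0 N1 N2 :: "'n::finite zpvec set"
  assumes decomp: "\<And>x. x \<in> ZpV p \<Longrightarrow>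
      \<exists>x0 x1 x2. x0 \<in> N0 \<and> x1 \<in> N1 \<and> x2 \<in> N2 \<and> x = zpv_add p x0 (zpv_add p x1 x2)"
    and "N0 \<union> N1 \<union> N2 \<subseteq> ZpV p"
  shows "vec.span (base_change \<iota> N0 \<union> base_change \<iota> N1 \<union> base_change \<iota> N2) = UNIV"
    (is "vec.span ?B = _")
proof -
  have "cart_basis \<subseteq> vec.span ?B"
  proof
    fix x :: "complex^'n" assume "x \<in> cart_basis"
    then obtain i where x: "x = axis i 1"
      unfolding cart_basis_def by blast
    define std :: "'n zpvec" where "std j = zp_of_int (if j = i then 1 else 0)" for j
    have "iota_vec \<iota> std = x"
      by (simp add: x std_def iota_vec_def axis_def vec_eq_iff if_distrib cong: if_cong)
    moreover have "std \<in> ZpV p"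
      by (simp add: std_def ZpV_def)
    then obtain x0 x1 x2 where xs: "x0 \<in> N0" "x1 \<in> N1" "x2 \<in> N2"
      "std = zpv_add p x0 (zpv_add p x1 x2)"
      using decomp by blast
    moreover have "x0 \<in> ZpV p" "x1 \<in> ZpV p" "x2 \<in> ZpV p"
      using xs assms(2) by auto
    ultimately have "x = iota_vec \<iota> x0 + (iota_vec \<iota> x1 + iota_vec \<iota> x2)"
      using iota_vec_zpv_add[of x1 x2] iota_vec_zpv_add[of x0 "zpv_add p x1 x2"] by simp
    moreover have "iota_vec \<iota> x0 \<in> ?B" "iota_vec \<iota> x1 \<in> ?B" "iota_vec \<iota> x2 \<in> ?B"
      using xs by (auto simp: base_change_def cspan_eq_span intro: vec.span_base)
    ultimately show "x \<in> vec.span ?B"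
      by (simp add: vec.span_add vec.span_base)
  qed
  then have "vec.span cart_basis \<subseteq> vec.span ?B"
    by (rule vec.span_minimal[OF _ vec.subspace_span])
  then show ?thesis
    by (simp add: top_le)
qed

end

section \<open>The Frobenius in a basis adapted to the slopes\<close>

definition block :: "nat \<Rightarrow> nat set" where
  "block s = (if s = 0 then {0} else if s = 1 then {1..20} else {21})"

lemma block_subset: "block s \<subseteq> {..<22}"
  by (auto simp: block_def)

lemma block_cases:
  "k < 22 \<Longrightarrow> k \<in> block 0 \<and> k \<notin> block 1 \<and> k \<notin> block 2 \<or> k \<notin> block 0 \<and> k \<in> block 1 \<and> k \<notin> block 2
    \<or> k \<notin> block 0 \<and> k \<notin> block 1 \<and> k \<in> block 2"
  by (auto simp: block_def)

lemma middle_eq_image_Suc: "{1..20::nat} = Suc ` {..<20}"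
proof -
  have "{..<20::nat} = {0..19}"
    by auto
  then show ?thesis
    by simp
qed

lemma sum_middle: "(\<Sum>k\<in>{1..20::nat}. g k) = (\<Sum>m<20. g (Suc m))"
  unfolding middle_eq_image_Suc by (simp add: sum.reindex)

lemma sum_lessThan_22: "(\<Sum>k<22::nat. g k) = g 0 + (\<Sum>k\<in>{1..20}. g k) + g 21"
proof -
  have "{..<22::nat} = insert 0 (insert 21 {1..20})"
    by auto
  then show ?thesis
    by (simp add: algebra_simps)
qed

text \<open>The basis \<open>f\<close> is adapted to \<open>M\<^sup>s \<otimes> \<complex>\<close>: \<open>f 0\<close> spans \<open>s = 0\<close>, \<open>f 1, \<dots>, f 20\<close> span
  \<open>s = 1\<close> and \<open>f 21\<close> spans \<open>s = 2\<close>; \<open>A\<close> is the matrix of \<open>F/q\<close> on the middle block.\<close>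
locale slope_basis = zp_embedding p \<iota> + spanning_family f "22::nat"
  for p \<iota> and f :: "nat \<Rightarrow> complex^'n" +
  fixes F :: "complex^'n^'n" and q :: nat and \<alpha> \<beta> \<gamma> \<delta> :: complex and A :: "nat \<Rightarrow> nat \<Rightarrow> complex"
  assumes p_dvd_q: "p dvd q" and q_nonzero: "q \<noteq> 0"
    and in_iota_ring: "\<alpha> \<in> iota_ring" "\<beta> \<in> iota_ring" "\<gamma> \<in> iota_ring" "\<delta> \<in> iota_ring"
      "\<And>l m. A l m \<in> iota_ring"
    and units: "\<alpha> * \<beta> = 1" "\<gamma> * \<delta> = 1"
    and F_f0: "F *v f 0 = \<alpha> *s f 0"
    and F_f21: "F *v f 21 = (of_nat q ^ 2 * \<gamma>) *s f 21"
    and F_middle: "\<And>l. l < 20 \<Longrightarrow> F *v f (Suc l) = of_nat q *s (\<Sum>m<20. A l m *s f (Suc m))"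
    and F_vcnj: "\<And>v. F *v vcnj v = vcnj (F *v v)"
    and eigenvalue_norm: "\<And>c v. v \<noteq> 0 \<Longrightarrow> F *v v = c *s v \<Longrightarrow> cmod c = real q"
    and diagonalizable:
      "\<exists>(P::complex^'n^'n) d. invertible P \<and> F ** P = P ** (\<chi> i j. if i = j then d i else 0)"
begin

definition F_coeff :: "nat \<Rightarrow> nat \<Rightarrow> complex" where
  "F_coeff j k =
    (if j = 0 then (if k = 0 then \<alpha> else 0)
     else if j \<le> 20 then (if 1 \<le> k \<and> k \<le> 20 then of_nat q * A (j - 1) (k - 1) else 0)
     else (if k = 21 then of_nat q ^ 2 * \<gamma> else 0))"

lemma F_coeff_across_blocks: "(j \<in> block s) \<noteq> (k \<in> block s) \<Longrightarrow> j < 22 \<Longrightarrow> k < 22 \<Longrightarrow> F_coeff j k = 0"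
  by (cases "s = 0"; cases "s = 1") (auto simp: F_coeff_def block_def)

lemma F_basis: "j < 22 \<Longrightarrow> F *v f j = (\<Sum>k<22. F_coeff j k *s f k)"
proof -
  assume "j < 22"
  then consider "j = 0" | "j = 21" | "j \<in> {1..20}"
    by force
  then show ?thesis
  proof cases
    case 3
    define l where "l = j - 1"
    have l: "l < 20" "j = Suc l"
      using 3 by (auto simp: l_def)
    have "(\<Sum>k<22. F_coeff j k *s f k) = (\<Sum>k\<in>{1..20}. F_coeff j k *s f k)"
      using 3 by (simp add: sum_lessThan_22 F_coeff_def)
    also have "\<dots> = (\<Sum>m<20. F_coeff j (Suc m) *s f (Suc m))"
      by (rule sum_middle)
    also have "\<dots> = (\<Sum>m<20. (of_nat q * A l m) *s f (Suc m))"
      using l by (intro sum.cong) (auto simp: F_coeff_def)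
    also have "\<dots> = F *v f j"
      using l F_middle[of l] by (simp add: vec.scale_sum_right vector_smult_assoc)
    finally show ?thesis
      by simp
  qed (simp_all add: sum_lessThan_22 F_coeff_def F_f0 F_f21)
qed

lemma coord_F: "k < 22 \<Longrightarrow> coord (F *v y) k = (\<Sum>j<22. coord y j * F_coeff j k)"
proof -
  assume k: "k < 22"
  have "F *v y = (\<Sum>j<22. coord y j *s (F *v f j))"
    by (subst coord_expansion[of y]) (simp add: vec.sum vec.scale)
  moreover have "j < 22 \<Longrightarrow> coord (F *v f j) k = F_coeff j k" for j
    using F_basis[of j] coord_unique k by simp
  ultimately show ?thesis
    using k by (simp add: coord_sum coord_scale)
qed

lemma eigenvector_coord:
  "F *v y = \<theta> *s y \<Longrightarrow> k < 22 \<Longrightarrow> (\<Sum>j<22. coord y j * F_coeff j k) = \<theta> * coord y k"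
  using coord_F[of k y] coord_scale[of k \<theta> y] by simp

lemma eigenvector_coord_0: "F *v y = \<theta> *s y \<Longrightarrow> coord y 0 * \<alpha> = \<theta> * coord y 0"
  using eigenvector_coord[of y \<theta> 0] by (simp add: sum_lessThan_22 F_coeff_def)

lemma eigenvector_coord_21: "F *v y = \<theta> *s y \<Longrightarrow> coord y 21 * (of_nat q ^ 2 * \<gamma>) = \<theta> * coord y 21"
  using eigenvector_coord[of y \<theta> 21] by (simp add: sum_lessThan_22 F_coeff_def)

lemma eigenvector_coord_middle:
  assumes "F *v y = \<theta> *s y" "k \<in> {1..20}"
  shows "\<theta> * coord y k = of_nat q * (\<Sum>j\<in>{1..20}. A (j - 1) (k - 1) * coord y j)"
proof -
  have "\<theta> * coord y k = (\<Sum>j<22. coord y j * F_coeff j k)"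
    using eigenvector_coord[OF assms(1)] assms(2) by simp
  also have "\<dots> = (\<Sum>j\<in>{1..20}. coord y j * F_coeff j k)"
    using assms(2) by (simp add: sum_lessThan_22 F_coeff_def)
  also have "\<dots> = (\<Sum>j\<in>{1..20}. of_nat q * (A (j - 1) (k - 1) * coord y j))"
    using assms(2) by (intro sum.cong) (auto simp: F_coeff_def)
  finally show ?thesis
    by (simp add: sum_distrib_left)
qed

lemma units_commute: "\<beta> * \<alpha> = 1" "\<delta> * \<gamma> = 1"
  using units by (simp_all add: mult.commute)

lemma q_not_invertible:
  assumes "r \<in> iota_ring"
  shows "of_nat q * r \<noteq> 1"
proof -
  obtain m where "q = p * m"
    using p_dvd_q by blast
  have "of_nat p * (of_nat m * r) \<noteq> 1"
    using assms by (simp add: p_not_invertible_in_iota_ring)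
  then show ?thesis
    using \<open>q = p * m\<close> by (simp add: mult.assoc)
qed

lemma middle_coord_fixed_point:
  assumes "F *v y = \<theta> *s y" "\<theta> * \<kappa> = 1" "k \<in> {1..20}"
  shows "coord y k = of_nat q * \<kappa> * (\<Sum>j\<in>{1..20}. A (j - 1) (k - 1) * coord y j)"
proof -
  have "coord y k = \<kappa> * (\<theta> * coord y k)"
    using assms(2) by (simp add: mult.assoc[symmetric] mult.commute)
  then show ?thesis
    using eigenvector_coord_middle[OF assms(1,3)] by (simp add: algebra_simps)
qed

text \<open>Transported to an \<open>'n\<close>-indexed vector, the middle coordinates form a solution of
  \<open>v = q \<kappa> A\<^sup>T v\<close>, and \<open>q\<close> is a multiple of \<open>p\<close>.\<close>
lemma middle_coord_eq_0_if_unit_eigenvalue: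
  assumes y: "F *v y = \<theta> *s y" and unit: "\<theta> * \<kappa> = 1" "\<kappa> \<in> iota_ring" and k: "k \<in> {1..20}"
  shows "coord y k = 0"
proof -
  obtain m where q: "q = p * m"
    using p_dvd_q by blast
  obtain h where h: "bij_betw h (UNIV::'n set) {..<22::nat}"
    using ex_bij_betw_finite_nat[of "UNIV::'n set"] card_eq by (auto simp: atLeast0LessThan)
  define v :: "complex^'n" where "v = (\<chi> i. if h i \<in> {1..20} then coord y (h i) else 0)"
  define N :: "complex^'n^'n" where
    "N = (\<chi> i i'. if h i \<in> {1..20} \<and> h i' \<in> {1..20} then A (h i' - 1) (h i - 1) else 0)"
  have "v = (of_nat p * (of_nat m * \<kappa>)) *s (N *v v)"
  proof (subst vec_eq_iff, intro allI)
    fix i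
    define g where "g j = (if h i \<in> {1..20} \<and> j \<in> {1..20} then A (j - 1) (h i - 1) * coord y j else 0)"
      for j
    have "(N *v v)$i = (\<Sum>i'\<in>UNIV. g (h i'))"
      by (simp add: matrix_vector_mult_def N_def v_def g_def) (intro sum.cong; simp)
    also have "\<dots> = (\<Sum>j<22. g j)"
      by (rule sum.reindex_bij_betw[OF h])
    also have "\<dots> = (if h i \<in> {1..20} then (\<Sum>j\<in>{1..20}. A (j - 1) (h i - 1) * coord y j) else 0)"
      by (cases "h i \<in> {1..20}") (auto simp: sum_lessThan_22 g_def)
    finally have "(N *v v)$i = \<dots>" .
    moreover have "coord y (h i) = of_nat q * \<kappa> * (\<Sum>j\<in>{1..20}. A (j - 1) (h i - 1) * coord y j)"
      if "h i \<in> {1..20}"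
      using middle_coord_fixed_point[OF y unit(1) that] .
    ultimately show "v$i = ((of_nat p * (of_nat m * \<kappa>)) *s (N *v v))$i"
      by (simp add: v_def q algebra_simps)
  qed
  then have "v = 0"
    by (rule eq_p_multiple_imp_zero[rotated 2]) (auto simp: N_def in_iota_ring unit(2))
  moreover have "k \<in> h ` UNIV"
    using bij_betw_imp_surj_on[OF h] k by auto
  then obtain i where "h i = k"
    by blast
  ultimately show ?thesis
    using k vec_lambda_beta[of "\<lambda>i. if h i \<in> {1..20} then coord y (h i) else 0" i]
    by (simp add: v_def)
qed

lemma unit_eigenvector_in_line:
  assumes y: "F *v y = \<theta> *s y" and unit: "\<theta> * \<kappa> = 1" "\<kappa> \<in> iota_ring"
  shows "y = coord y 0 *s f 0"
proof (rule coord_eqI)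
  have "coord y 21 = 0"
  proof (rule ccontr)
    assume "coord y 21 \<noteq> 0"
    then have "of_nat q ^ 2 * \<gamma> = \<theta>"
      using eigenvector_coord_21[OF y] by (simp add: mult.commute)
    then have "of_nat q ^ 2 * \<gamma> * \<kappa> = 1"
      using unit(1) by simp
    then have "of_nat q * (of_nat q * \<gamma> * \<kappa>) = 1"
      by (simp add: power2_eq_square mult.assoc)
    then show False
      using q_not_invertible[of "of_nat q * \<gamma> * \<kappa>"] in_iota_ring unit(2) by simp
  qed
  moreover have "coord y j = 0" if "j \<in> {1..20}" for j
    using middle_coord_eq_0_if_unit_eigenvalue[OF y unit that] .
  ultimately show "coord y j = coord (coord y 0 *s f 0) j" if "j < 22" for j
    using that block_cases[OF that] by (auto simp: coord_scale coord_basis block_def)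
qed

lemma vcnj_eigenvector:
  assumes "y \<noteq> 0" "F *v y = \<theta> *s y"
  shows "\<theta> * cnj \<theta> = of_nat q ^ 2" "F *v vcnj y = cnj \<theta> *s vcnj y"
proof -
  have "cmod \<theta> = real q"
    using eigenvalue_norm assms by blast
  then show "\<theta> * cnj \<theta> = of_nat q ^ 2"
    using complex_norm_square[of \<theta>] by simp
  show "F *v vcnj y = cnj \<theta> *s vcnj y"
    using assms F_vcnj[of y] by (simp add: vcnj_scale)
qed

lemma cnj_top_eigenvalue: "cnj (of_nat q ^ 2 * \<gamma>) = \<delta>"
proof -
  have "of_nat q ^ 2 * \<gamma> * cnj (of_nat q ^ 2 * \<gamma>) = of_nat q ^ 2"
    using vcnj_eigenvector(1)[OF basis_nonzero F_f21] by simp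
  then have "\<gamma> * cnj (of_nat q ^ 2 * \<gamma>) = 1"
    using q_nonzero by (simp add: mult.assoc)
  then have "\<delta> = (\<delta> * \<gamma>) * cnj (of_nat q ^ 2 * \<gamma>)"
    by (simp add: mult.assoc)
  then show ?thesis
    using units_commute(2) by simp
qed

lemma vcnj_f21: "\<exists>c. c \<noteq> 0 \<and> vcnj (f 21) = c *s f 0"
proof -
  have "F *v vcnj (f 21) = \<delta> *s vcnj (f 21)"
    using vcnj_eigenvector(2)[OF basis_nonzero F_f21] cnj_top_eigenvalue by simp
  then have "vcnj (f 21) = coord (vcnj (f 21)) 0 *s f 0"
    using unit_eigenvector_in_line units_commute(2) in_iota_ring(3) by blast
  moreover have "vcnj (f 21) \<noteq> 0"
    using basis_nonzero by simp
  ultimately have "coord (vcnj (f 21)) 0 \<noteq> 0"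
    by (metis vector_smult_lzero)
  with \<open>vcnj (f 21) = _\<close> show ?thesis
    by blast
qed

definition V :: "nat \<Rightarrow> (complex^'n) set" where
  "V s = vec.span (f ` block s)"

lemma V_iff_coord: "y \<in> V s \<longleftrightarrow> (\<forall>j<22. j \<notin> block s \<longrightarrow> coord y j = 0)"
  unfolding V_def span_basis_subset[OF block_subset] by simp

lemma V_1_iff: "y \<in> V 1 \<longleftrightarrow> coord y 0 = 0 \<and> coord y 21 = 0"
proof
  assume "coord y 0 = 0 \<and> coord y 21 = 0"
  show "y \<in> V 1"
    unfolding V_iff_coord
  proof (intro allI impI)
    fix j :: nat assume "j < 22" "j \<notin> block 1"
    then have "j = 0 \<or> j = 21"
      by (auto simp: block_def)
    then show "coord y j = 0"
      using \<open>coord y 0 = 0 \<and> coord y 21 = 0\<close> by auto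
  qed
qed (simp add: V_iff_coord block_def)

lemma csubspace_V: "csubspace (V s)"
  unfolding V_def by (rule csubspace_span)

lemma vcnj_V_2: "vcnj ` V 2 = V 0"
proof -
  obtain c where "c \<noteq> 0" "vcnj (f 21) = c *s f 0"
    using vcnj_f21 by blast
  then show ?thesis
    by (simp add: V_def block_def vcnj_span span_singleton_scale)
qed

lemma vcnj_V_0: "vcnj ` V 0 = V 2"
  using arg_cong[OF vcnj_V_2, of "image vcnj"] by (simp add: image_image)

lemma V_independent:
  assumes "x0 \<in> V 0" "x1 \<in> V 1" "x2 \<in> V 2" "x0 + x1 + x2 = 0"
  shows "x0 = 0 \<and> x1 = 0 \<and> x2 = 0"
proof -
  have "coord x0 k = 0 \<and> coord x1 k = 0 \<and> coord x2 k = 0" if "k < 22" for k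
  proof -
    have "coord x0 k + coord x1 k + coord x2 k = 0"
      using arg_cong[OF assms(4), of "\<lambda>x. coord x k"] that by (simp add: coord_add)
    then show ?thesis
      using block_cases[OF that] assms(1-3) that by (auto simp: V_iff_coord)
  qed
  then show ?thesis
    by (auto intro!: coord_eqI)
qed

lemma vcnj_middle_eigenvector:
  assumes y: "y \<in> V 1" "F *v y = \<theta> *s y"
  shows "vcnj y \<in> V 1"
proof (cases "y = 0")
  case False
  have z: "F *v vcnj y = cnj \<theta> *s vcnj y"
    using vcnj_eigenvector(2)[OF False y(2)] .
  have "coord (vcnj y) 21 = 0"
  proof (rule ccontr)
    assume "coord (vcnj y) 21 \<noteq> 0"
    then have "cnj \<theta> = of_nat q ^ 2 * \<gamma>"
      using eigenvector_coord_21[OF z] by (simp add: mult.commute)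
    then have "\<theta> = \<delta>"
      using cnj_top_eigenvalue complex_cnj_cnj[of \<theta>] by simp
    then have "y = coord y 0 *s f 0"
      using unit_eigenvector_in_line[OF y(2)] units_commute(2) in_iota_ring(3) by blast
    then show False
      using False y(1) V_1_iff by simp
  qed
  moreover have "coord (vcnj y) 0 = 0"
  proof (rule ccontr)
    assume "coord (vcnj y) 0 \<noteq> 0"
    then have "cnj \<theta> = \<alpha>"
      using eigenvector_coord_0[OF z] by (simp add: mult.commute)
    then have "vcnj y = coord (vcnj y) 0 *s f 0"
      using unit_eigenvector_in_line[OF z] units(1) in_iota_ring by blast
    then have "vcnj y \<in> vec.span {f 0}"
      by (metis vec.span_base vec.span_scale singletonI)
    then have "vcnj y \<in> V 0"
      by (simp add: V_def block_def)
    then have "vcnj (vcnj y) \<in> vcnj ` V 0"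
      by (rule imageI)
    then have "y \<in> V 2"
      using vcnj_V_0 by simp
    then have "(-1) *s y \<in> V 2"
      unfolding V_def by (rule vec.span_scale)
    then show False
      using V_independent[of 0 y "(-1) *s y"] y(1) False
      by (simp add: V_def vec.span_zero vec_eq_iff)
  qed
  ultimately show ?thesis
    using V_1_iff by simp
qed (simp add: V_def vec.span_zero)

definition proj :: "nat \<Rightarrow> complex^'n \<Rightarrow> complex^'n" where
  "proj s y = (\<Sum>j\<in>block s. coord y j *s f j)"

lemma coord_proj: "k < 22 \<Longrightarrow> coord (proj s y) k = (if k \<in> block s then coord y k else 0)"
proof (rule coord_unique)
  have "proj s y = (\<Sum>j<22. if j \<in> block s then coord y j *s f j else 0)"
    unfolding proj_def using block_subset[of s] by (simp add: sum.If_cases Int_absorb1)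
  then show "proj s y = (\<Sum>k<22. (if k \<in> block s then coord y k else 0) *s f k)"
    by (simp add: if_distrib[of "\<lambda>c. c *s _"] cong: if_cong)
qed

lemma proj_in_V: "proj s y \<in> V s"
  using coord_proj by (auto simp: V_iff_coord)

lemma proj_sum: "v = proj 0 v + proj 1 v + proj 2 v"
proof (rule coord_eqI)
  fix k :: nat assume "k < 22"
  then show "coord v k = coord (proj 0 v + proj 1 v + proj 2 v) k"
    using block_cases[OF \<open>k < 22\<close>] by (auto simp: coord_add coord_proj)
qed

lemma V_spanning: "\<exists>x0 x1 x2. x0 \<in> V 0 \<and> x1 \<in> V 1 \<and> x2 \<in> V 2 \<and> v = x0 + x1 + x2"
  using proj_in_V proj_sum by blast

lemma proj_lincomb: "proj s (\<Sum>j\<in>UNIV. c j *s w j) = (\<Sum>j\<in>UNIV. c j *s proj s (w (j::'m::finite)))"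
proof (rule coord_eqI)
  fix k :: nat assume "k < 22"
  then show "coord (proj s (\<Sum>j\<in>UNIV. c j *s w j)) k = coord (\<Sum>j\<in>UNIV. c j *s proj s (w j)) k"
    by (cases "k \<in> block s") (simp_all add: coord_proj coord_sum coord_scale)
qed

lemma proj_eigenvector:
  assumes "F *v w = d *s w"
  shows "F *v proj s w = d *s proj s w"
proof (rule coord_eqI)
  fix k :: nat assume k: "k < 22"
  have "coord (F *v proj s w) k = (\<Sum>j<22. coord (proj s w) j * F_coeff j k)"
    using coord_F[OF k] .
  also have "\<dots> = (\<Sum>j<22. if k \<in> block s then coord w j * F_coeff j k else 0)"
    by (intro sum.cong refl) (use k F_coeff_across_blocks in \<open>auto simp: coord_proj\<close>)
  also have "\<dots> = (if k \<in> block s then d * coord w k else 0)"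
    using eigenvector_coord[OF assms k] by simp
  also have "\<dots> = coord (d *s proj s w) k"
    using k by (simp add: coord_scale coord_proj)
  finally show "coord (F *v proj s w) k = coord (d *s proj s w) k" .
qed

lemma proj_id: "x \<in> V s \<Longrightarrow> proj s x = x"
  by (rule coord_eqI) (auto simp: coord_proj V_iff_coord)

lemma vcnj_V_1: "vcnj ` V 1 \<subseteq> V 1"
proof
  fix y assume "y \<in> vcnj ` V 1"
  then obtain x where x: "x \<in> V 1" "y = vcnj x"
    by blast
  obtain P :: "complex^'n^'n" and d
    where P: "invertible P" "F ** P = P ** (\<chi> i j. if i = j then d i else 0)"
    using diagonalizable by blast
  obtain w c where w: "\<And>j. F *v w j = d j *s w j" and "x = (\<Sum>j\<in>UNIV. c j *s w j)"
    using diagonalizable_eigenvector_expansion[OF P, of x] by blast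
  then have "x = proj 1 (\<Sum>j\<in>UNIV. c j *s w j)"
    using proj_id[OF x(1)] by simp
  then have "x = (\<Sum>j\<in>UNIV. c j *s proj 1 (w j))"
    by (simp add: proj_lincomb)
  then have "y = (\<Sum>j\<in>UNIV. cnj (c j) *s vcnj (proj 1 (w j)))"
    using x(2) by (simp add: vcnj_sum vcnj_scale)
  also have "\<dots> \<in> V 1"
    unfolding V_def
    by (intro vec.span_sum vec.span_scale, fold V_def)
      (rule vcnj_middle_eigenvector[OF proj_in_V proj_eigenvector[OF w]])
  finally show "y \<in> V 1" .
qed

lemma vcnj_V: "s \<le> 2 \<Longrightarrow> vcnj ` V s = V (2 - s)"
proof -
  have "V 1 \<subseteq> vcnj ` V 1"
    using vcnj_V_1 by (force simp: image_iff intro: vcnj_vcnj[symmetric])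
  then have "vcnj ` V 1 = V 1"
    using vcnj_V_1 by blast
  moreover assume "s \<le> 2"
  then have "s = 0 \<or> s = 1 \<or> s = 2"
    by auto
  ultimately show ?thesis
    using vcnj_V_0 vcnj_V_2 by auto
qed

end

section \<open>Constructing the adapted basis from (M3) and (M4)\<close>

definition glue :: "(nat \<Rightarrow> 'a) \<Rightarrow> (nat \<Rightarrow> 'a) \<Rightarrow> (nat \<Rightarrow> 'a) \<Rightarrow> nat \<Rightarrow> 'a" where
  "glue e0 e1 e2 j = (if j = 0 then e0 0 else if j \<le> 20 then e1 (j - 1) else e2 0)"

lemma glue_image_block:
  "glue e0 e1 e2 ` block 0 = e0 ` {..<1}" "glue e0 e1 e2 ` block 1 = e1 ` {..<20}"
  "glue e0 e1 e2 ` block 2 = e2 ` {..<1}"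
proof -
  have "glue e0 e1 e2 ` block 1 = (\<lambda>l. glue e0 e1 e2 (Suc l)) ` {..<20}"
    unfolding block_def middle_eq_image_Suc by (simp add: image_image)
  also have "\<dots> = e1 ` {..<20}"
    by (intro image_cong) (auto simp: glue_def)
  finally show "glue e0 e1 e2 ` block 1 = e1 ` {..<20}" .
qed (auto simp: block_def glue_def)

context zp_embedding
begin

lemma base_change_glue:
  assumes "iota_generators (Ms 0) 1 e0" "iota_generators (Ms 1) 20 e1" "iota_generators (Ms 2) 1 e2"
    and "s \<le> 2"
  shows "base_change \<iota> (Ms s) = vec.span (glue e0 e1 e2 ` block s)"
proof -
  have "s = 0 \<or> s = 1 \<or> s = 2"
    using \<open>s \<le> 2\<close> by auto
  then show ?thesis
    using base_change_iota_generators[OF assms(1)] base_change_iota_generators[OF assms(2)]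
      base_change_iota_generators[OF assms(3)]
    by (elim disjE) (simp_all only: glue_image_block)
qed

lemma spanning_family_glue:
  fixes Ms :: "nat \<Rightarrow> 'n::finite zpvec set"
  assumes card: "CARD('n) = 22"
    and decomp: "\<forall>x\<in>ZpV p. \<exists>!(x0, x1, x2). x0 \<in> Ms 0 \<and> x1 \<in> Ms 1 \<and> x2 \<in> Ms 2 \<and>
      x = zpv_add p x0 (zpv_add p x1 x2)"
    and gen: "iota_generators (Ms 0) 1 e0" "iota_generators (Ms 1) 20 e1" "iota_generators (Ms 2) 1 e2"
  shows "spanning_family (glue e0 e1 e2) 22"
proof -
  let ?f = "glue e0 e1 e2" and ?B = "base_change \<iota> (Ms 0) \<union> base_change \<iota> (Ms 1) \<union> base_change \<iota> (Ms 2)"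
  have "\<exists>x0 x1 x2. x0 \<in> Ms 0 \<and> x1 \<in> Ms 1 \<and> x2 \<in> Ms 2 \<and> x = zpv_add p x0 (zpv_add p x1 x2)"
    if "x \<in> ZpV p" for x
    using ex1_implies_ex[OF decomp[rule_format, OF that]] by (simp add: split_paired_Ex)
  moreover have "Ms 0 \<union> Ms 1 \<union> Ms 2 \<subseteq> ZpV p"
    using gen iota_generators_ZpV by blast
  ultimately have "vec.span ?B = UNIV"
    by (rule span_base_change_summands)
  moreover have "vec.span (?f ` block s) \<subseteq> vec.span (?f ` {..<22})" for s
    by (intro vec.span_mono image_mono block_subset)
  then have "?B \<subseteq> vec.span (?f ` {..<22})"
    using base_change_glue[OF gen, of 0] base_change_glue[OF gen, of 1] base_change_glue[OF gen, of 2]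
    by auto
  then have "vec.span ?B \<subseteq> vec.span (?f ` {..<22})"
    by (rule vec.span_minimal[OF _ vec.subspace_span])
  ultimately show ?thesis
    using card by unfold_locales auto
qed

lemma slope_basis_glue:
  fixes F :: "int^'n^'n"
  assumes fam: "spanning_family (glue e0 e1 e2) 22" and q: "p dvd q" "q \<noteq> 0" and M3: "M3 q F"
    and gen: "iota_generators (Ms 0) 1 e0" "iota_generators (Ms 1) 20 e1" "iota_generators (Ms 2) 1 e2"
    and FM: "\<And>s. s \<le> 2 \<Longrightarrow> zpv_mat p F ` Ms s = zpv_smul_int p (int q ^ s) ` Ms s"
  shows "\<exists>\<alpha> \<beta> \<gamma> \<delta> A. slope_basis p \<iota> (glue e0 e1 e2) (complex_mat F) q \<alpha> \<beta> \<gamma> \<delta> A"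
proof -
  interpret spanning_family "glue e0 e1 e2" 22
    by (rule fam)
  have f: "glue e0 e1 e2 0 = e0 0" "\<And>l. l < 20 \<Longrightarrow> glue e0 e1 e2 (Suc l) = e1 l"
    "glue e0 e1 e2 21 = e2 0"
    by (simp_all add: glue_def)
  have "zpv_mat p F ` Ms 0 = zpv_smul_int p 1 ` Ms 0"
    using FM[of 0] by simp
  moreover have "e0 0 \<noteq> 0"
    using f(1) basis_nonzero[of 0] by simp
  ultimately obtain \<alpha> \<beta> where \<alpha>: "\<alpha> \<in> iota_ring" "\<beta> \<in> iota_ring" "\<alpha> * \<beta> = 1"
    "complex_mat F *v e0 0 = (of_int 1 * \<alpha>) *s e0 0"
    using rank_one_eigenvector[OF gen(1)] one_neq_zero by blast
  have "e2 0 \<noteq> 0" "int q ^ 2 \<noteq> 0"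
    using f(3) basis_nonzero[of 21] \<open>q \<noteq> 0\<close> by simp_all
  then obtain \<gamma> \<delta> where \<gamma>: "\<gamma> \<in> iota_ring" "\<delta> \<in> iota_ring" "\<gamma> * \<delta> = 1"
    "complex_mat F *v e2 0 = (of_int (int q ^ 2) * \<gamma>) *s e2 0"
    using rank_one_eigenvector[OF gen(3) FM[of 2]] by blast
  have "zpv_mat p F ` Ms 1 = zpv_smul_int p (int q) ` Ms 1"
    using FM[of 1] by simp
  then obtain A where A: "\<And>l m. A l m \<in> iota_ring"
    "\<And>l. l < 20 \<Longrightarrow> complex_mat F *v e1 l = of_int (int q) *s (\<Sum>m<20. A l m *s e1 m)"
    using iota_generators_matrix[OF gen(2)] by blast
  have "slope_basis p \<iota> (glue e0 e1 e2) (complex_mat F) q \<alpha> \<beta> \<gamma> \<delta> A"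
  proof (intro slope_basis.intro slope_basis_axioms.intro zp_embedding_axioms fam)
    show "complex_mat F *v glue e0 e1 e2 (Suc l) = of_nat q *s (\<Sum>m<20. A l m *s glue e0 e1 e2 (Suc m))"
      if "l < 20" for l
      using A(2)[OF that] that f(2) by simp
    show "cmod c = real q" if "v \<noteq> 0" "complex_mat F *v v = c *s v" for c v
      using M3 that unfolding M3_def by blast
    show "\<exists>(P::complex^'n^'n) d. invertible P \<and> complex_mat F ** P = P ** (\<chi> i j. if i = j then d i else 0)"
      using M3 unfolding M3_def by blast
  qed (use \<alpha> \<gamma> A(1) q f complex_mat_mult_vcnj in simp_all)
  then show ?thesis
    by blast
qed

lemma slope_basis_from_M4:
  fixes F :: "int^'n^'n"
  assumes card: "CARD('n) = 22" and q: "q = p ^ a" "a > 0" and M3: "M3 q F" and M4: "M4 p q F Ms"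
  shows "\<exists>f \<alpha> \<beta> \<gamma> \<delta> A. slope_basis p \<iota> f (complex_mat F) q \<alpha> \<beta> \<gamma> \<delta> A \<and>
    (\<forall>s\<le>2. base_change \<iota> (Ms s) = vec.span (f ` block s))"
proof -
  have free: "zp_free_submodule p (Ms 0) 1" "zp_free_submodule p (Ms 1) 20" "zp_free_submodule p (Ms 2) 1"
    and decomp: "\<forall>x\<in>ZpV p. \<exists>!(x0, x1, x2). x0 \<in> Ms 0 \<and> x1 \<in> Ms 1 \<and> x2 \<in> Ms 2 \<and>
      x = zpv_add p x0 (zpv_add p x1 x2)"
    and FM: "\<forall>s\<le>2. zpv_mat p F ` Ms s = zpv_smul_int p (int q ^ s) ` Ms s"
    using M4 unfolding M4_def by blast+
  obtain e0 e1 e2 where gen: "iota_generators (Ms 0) 1 e0" "iota_generators (Ms 1) 20 e1"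
    "iota_generators (Ms 2) 1 e2"
    using iota_generators_exist[OF free(1)] iota_generators_exist[OF free(2)]
      iota_generators_exist[OF free(3)] by metis
  have "p dvd q" "q \<noteq> 0"
    using q p_gt_1 by (auto intro: dvd_power)
  then have "\<exists>\<alpha> \<beta> \<gamma> \<delta> A. slope_basis p \<iota> (glue e0 e1 e2) (complex_mat F) q \<alpha> \<beta> \<gamma> \<delta> A"
    using slope_basis_glue[OF spanning_family_glue[OF card decomp gen] _ _ M3 gen] FM by blast
  then show ?thesis
    using base_change_glue[OF gen] by blast
qed

end

theorem lemma3p3:
  fixes p a q :: nat
    and \<iota> :: "(nat \<Rightarrow> int) \<Rightarrow> complex"
    and G F :: "int^'n^'n"
    and Ms :: "nat \<Rightarrow> 'n zpvec set"
  assumes "prime p" and "a > 0" and "q = p ^ a"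
    and "ring_embedding p \<iota>"
    and "M1 G" and "M2 q G F" and "M3 q F" and "M4 p q F Ms"
  shows "(\<forall>s\<in>{0,1,2}. vcnj ` base_change \<iota> (Ms s) = base_change \<iota> (Ms (2 - s))) \<and>
         Z_hodge_structure 2 (\<lambda>k. if k \<in> {0,1,2} then base_change \<iota> (Ms (nat k)) else {0})"
proof -
  interpret zp_embedding p \<iota>
    using prime_gt_1_nat[OF \<open>prime p\<close>] \<open>ring_embedding p \<iota>\<close> by unfold_locales
  have card: "CARD('n) = 22"
    using \<open>M1 G\<close> by (simp add: M1_def has_signature_def)
  obtain f \<alpha> \<beta> \<gamma> \<delta> A where "slope_basis p \<iota> f (complex_mat F) q \<alpha> \<beta> \<gamma> \<delta> A"
    and bc: "\<forall>s\<le>2. base_change \<iota> (Ms s) = vec.span (f ` block s)"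
    using slope_basis_from_M4[OF card \<open>q = p ^ a\<close> \<open>a > 0\<close> \<open>M3 q F\<close> \<open>M4 p q F Ms\<close>] by blast
  then interpret slope_basis p \<iota> f "complex_mat F" q \<alpha> \<beta> \<gamma> \<delta> A
    by simp
  have Ms_V: "s \<le> 2 \<Longrightarrow> base_change \<iota> (Ms s) = V s" for s
    using bc by (simp add: V_def)
  have "(\<lambda>k. if k \<in> {0,1,2} then base_change \<iota> (Ms (nat k)) else {0}) =
      (\<lambda>k. if k \<in> {0,1,2} then V (nat k) else {0})"
    using Ms_V by (auto intro!: ext)
  moreover have "Z_hodge_structure 2 (\<lambda>k. if k \<in> {0,1,2} then V (nat k) else {0})"
    by (rule Z_hodge_structure_weight_2I[OF csubspace_V V_spanning V_independent vcnj_V])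
  ultimately show ?thesis
    using Ms_V vcnj_V by auto
qed

end
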